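(* For every deterministic interactive Turing machine $M$ there is a lineage $A_1, A_2, \dots$ of deterministic autopoietic automata (reading a single input stream, each $A_{i+1}$ being the new offspring of $A_i$ and continuing to read the input stream from the position reached by $A_i$) that simulates $M$, i.e., on every input stream the lineage produces the same output stream as $M$.
   Context: A (deterministic) autopoietic automaton $A$ is a finite automaton with state set $Q$, a start state $q_0 \in Q\setminus R$, a subset $R\subseteq Q$ of reproducing-mode states (states in $Q\setminus R$ are transducer-mode states), a special state $q_1\in R$, and a transition partial function $\delta$ (a partial function of (observed symbol, current state), giving a new state, a symbol to write, and a direction). Symbols come from a potentially infinite alphabet $\sigma_1,\sigma_2,\dots$, with $\sigma_i$ encoded in unary by $i$. The automaton has a finite read-only input tape which always contains the code of $A$: a sequence, in arbitrary order, of 5-tuples, one per transition of $\delta$. In reproducing mode (states in $R$) the automaton moves a head on this read-only input tape and writes symbols onto a one-way output tape. In transducer mode (states in $Q\setminus R$) it does not touch the tapes, but reads one symbol at a time from an input buffer connected to an infinite input stream and writes one symbol at a time into an output buffer, producing an output stream. When reproducing mode ends by entering $q_1$, $A$ splits into the old $A$ (same input tape, empty output tape) and the offspring $A'$ whose input tape is the previous output tape and whose output tape is empty; both start in $q_0$ with heads at the left end. If the offspring's input tape is not a proper encoding of a transition function, it stops. The offspring relation defines a tree; a lineage is a path $A_1, A_2,\dots$ in this tree. An interactive Turing machine is a Turing machine that reads one symbol at a time from an input buffer connected to an input stream and writes one symbol at a time to an output buffer, creating an output stream. *)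

theory Defs
  imports Main "HOL-Library.Sublist"
begin

text \<open>Symbols sigma_i are represented by natural numbers i. Head moves:
  direction 1 = left, 2 = right, anything else = stay.\<close>

definition move :: "nat \<Rightarrow> int \<Rightarrow> int" where
  "move d h = (if d = 1 then h - 1 else if d = 2 then h + 1 else h)"

text \<open>Equality of (possibly infinite) output streams, given by the monotone
  chains of finite output prefixes produced after n steps.\<close>

definition same_output_stream :: "(nat \<Rightarrow> nat list) \<Rightarrow> (nat \<Rightarrow> nat list) \<Rightarrow> bool" where
  "same_output_stream f g \<longleftrightarrow> (\<forall>w. (\<exists>n. prefix w (f n)) \<longleftrightarrow> (\<exists>n. prefix w (g n)))"

text \<open>Transition partial function: (observed symbol, state) to
  (new state, written symbol, direction).\<close>

type_synonym aa_trans = "(nat \<times> nat) \<rightharpoonup> (nat \<times> nat \<times> nat)"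

text \<open>Code of an automaton on its read-only tape: tape symbols are 1 (unary
  stroke) and 2 (field terminator); each number n is written in unary as
  1^n 2; a transition is the concatenation of its five fields; the code is
  the concatenation of all transitions, each exactly once, in arbitrary order.\<close>

definition enc_num :: "nat \<Rightarrow> nat list" where
  "enc_num n = replicate n 1 @ [2]"

fun enc_tuple :: "nat \<times> nat \<times> nat \<times> nat \<times> nat \<Rightarrow> nat list" where
  "enc_tuple (a, q, q', b, d) =
     enc_num a @ enc_num q @ enc_num q' @ enc_num b @ enc_num d"

definition encodes :: "nat list \<Rightarrow> aa_trans \<Rightarrow> bool" where
  "encodes c \<delta> \<longleftrightarrow>
     (\<forall>x q' b d. \<delta> x = Some (q', b, d) \<longrightarrow> d \<le> 2) \<and>
     (\<exists>ts. distinct ts \<and>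
           set ts = {(a, q, q', b, d). \<delta> (a, q) = Some (q', b, d)} \<and>
           c = concat (map enc_tuple ts))"

definition proper_code :: "nat list \<Rightarrow> bool" where
  "proper_code c \<longleftrightarrow> (\<exists>\<delta>. encodes c \<delta>)"

definition delta_of :: "nat list \<Rightarrow> aa_trans" where
  "delta_of c = (if proper_code c then (THE \<delta>. encodes c \<delta>) else Map.empty)"

definition q0 :: nat where "q0 = 0"
definition q1 :: nat where "q1 = 1"
definition reproducing :: "nat \<Rightarrow> bool" where "reproducing q \<longleftrightarrow> odd q"

definition read_tape :: "nat list \<Rightarrow> int \<Rightarrow> nat" where
  "read_tape c h = (if 0 \<le> h \<and> h < int (length c) then c ! nat h else 0)"

text \<open>Configuration of the lineage: the current member (its code), its state,
  the input tape head, its output tape, the position reached in the shared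
  input stream, the output stream produced so far, and whether the lineage
  has stopped (offspring with an improper code).\<close>

record lin_cfg =
  code :: "nat list"
  st :: nat
  hpos :: int
  otape :: "nat list"
  ipos :: nat
  outs :: "nat list"
  dead :: bool

text \<open>Splitting: the lineage continues with the offspring, whose input tape is
  the old output tape; it starts in q0 with head at the left end and empty
  output tape, and continues the input stream where the parent stopped.\<close>

definition spawn :: "lin_cfg \<Rightarrow> lin_cfg" where
  "spawn cf = (if proper_code (otape cf)
      then cf\<lparr>code := otape cf, st := q0, hpos := 0, otape := []\<rparr>
      else cf\<lparr>dead := True\<rparr>)"

text \<open>Reproducing mode: read the code tape, move the head, write to
  the one-way output tape (symbol 0 means: write nothing).\<close>

definition lin_step :: "(nat \<Rightarrow> nat) \<Rightarrow> lin_cfg \<Rightarrow> lin_cfg option" where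
  "lin_step s cf =
    (if dead cf then None else
     (let \<delta> = delta_of (code cf); q = st cf in
      if reproducing q then
        (case \<delta> (read_tape (code cf) (hpos cf), q) of
           None \<Rightarrow> None
         | Some (q', b, d) \<Rightarrow>
             (let cf' = cf\<lparr>st := q', hpos := move d (hpos cf),
                           otape := (if b = 0 then otape cf else otape cf @ [b])\<rparr>
              in Some (if q' = q1 then spawn cf' else cf')))
      else
        (case \<delta> (s (ipos cf), q) of
           None \<Rightarrow> None
         | Some (q', b, d) \<Rightarrow>
             (let cf' = cf\<lparr>st := q', ipos := Suc (ipos cf), outs := outs cf @ [b]\<rparr>
              in Some (if q' = q1 then spawn cf' else cf')))))"

fun lin_exec :: "(nat \<Rightarrow> nat) \<Rightarrow> nat \<Rightarrow> lin_cfg \<Rightarrow> lin_cfg" where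
  "lin_exec s 0 cf = cf"
| "lin_exec s (Suc n) cf =
     (case lin_step s (lin_exec s n cf) of None \<Rightarrow> lin_exec s n cf | Some cf' \<Rightarrow> cf')"

definition lin_init :: "nat list \<Rightarrow> lin_cfg" where
  "lin_init c = \<lparr>code = c, st = q0, hpos = 0, otape = [], ipos = 0, outs = [], dead = False\<rparr>"

text \<open>One two-way infinite work tape (blank 0), start state 0. Transition:
  (state, input symbol, scanned symbol) to (new state, output symbol,
  written symbol, direction). A Turing machine has a finite
  transition table.\<close>

type_synonym itm = "(nat \<times> nat \<times> nat) \<rightharpoonup> (nat \<times> nat \<times> nat \<times> nat)"

record itm_cfg =
  mst :: nat
  mtape :: "int \<Rightarrow> nat"
  mhead :: int
  mipos :: nat
  mouts :: "nat list"

definition itm_step :: "itm \<Rightarrow> (nat \<Rightarrow> nat) \<Rightarrow> itm_cfg \<Rightarrow> itm_cfg option" where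
  "itm_step M s c =
    (case M (mst c, s (mipos c), mtape c (mhead c)) of
       None \<Rightarrow> None
     | Some (q', b, w, d) \<Rightarrow>
         Some \<lparr>mst = q', mtape = (mtape c)(mhead c := w), mhead = move d (mhead c),
               mipos = Suc (mipos c), mouts = mouts c @ [b]\<rparr>)"

fun itm_exec :: "itm \<Rightarrow> (nat \<Rightarrow> nat) \<Rightarrow> nat \<Rightarrow> itm_cfg \<Rightarrow> itm_cfg" where
  "itm_exec M s 0 c = c"
| "itm_exec M s (Suc n) c =
     (case itm_step M s (itm_exec M s n c) of None \<Rightarrow> itm_exec M s n c | Some c' \<Rightarrow> c')"

definition itm_init :: itm_cfg where
  "itm_init = \<lparr>mst = 0, mtape = (\<lambda>_. 0), mhead = 0, mipos = 0, mouts = []\<rparr>"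

end

theory Submission
  imports Defs "HOL-Library.Countable"
begin

(* The lineage simulates M step by step, each member standing for one configuration of M. The
   code of a member consists of three parts. First, a transition from the never entered state 2
   whose unary fields store the tape halves left and right of the head as numbers L and R in
   base K, least significant digit next to the head. Second, the transducer transitions from q0
   for the current state p and scanned symbol x: on input a they emit M's output and enter the
   reproducing program with M's new state, written symbol and direction. Third, the code of a
   fixed reproducing program, common to all members. After its single transducer step a member
   runs this program, which rewrites its own code into the successor's: the new L and R arise
   from multiplying and dividing unary numbers by K while the first transition is copied, the
   new table is written from finitely many stored copies, the old table is skipped, and the
   program copies its own code verbatim before entering q1 at the end of the tape. *)

lemma enc_num_append_inj: "enc_num m @ xs = enc_num n @ ys \<Longrightarrow> m = n \<and> xs = ys"
proof (induction m arbitrary: n)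
  case 0 then show ?case by (cases n) (auto simp: enc_num_def)
next
  case (Suc m) then show ?case by (cases n) (auto simp: enc_num_def)
qed

lemma enc_tuple_append_inj: "enc_tuple t @ xs = enc_tuple t' @ ys \<Longrightarrow> t = t' \<and> xs = ys"
  by (cases t; cases t') (simp, metis append.assoc enc_num_append_inj)

lemma enc_tuple_nonempty: "enc_tuple t \<noteq> []"
  by (cases t) (auto simp: enc_num_def)

lemma concat_map_enc_tuple_inj:
  "concat (map enc_tuple ts) = concat (map enc_tuple ts') \<Longrightarrow> ts = ts'"
proof (induction ts arbitrary: ts')
  case Nil then show ?case by (cases ts') (auto simp: enc_tuple_nonempty)
next
  case (Cons t ts) then show ?case
    by (cases ts') (auto simp: enc_tuple_nonempty dest: enc_tuple_append_inj)
qed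

definition trans_graph :: "aa_trans \<Rightarrow> (nat \<times> nat \<times> nat \<times> nat \<times> nat) set" where
  "trans_graph \<delta> = {(a, q, q', b, d). \<delta> (a, q) = Some (q', b, d)}"

lemma mem_trans_graph: "(a, q, v) \<in> trans_graph \<delta> \<longleftrightarrow> \<delta> (a, q) = Some v"
  by (cases v) (simp add: trans_graph_def)

lemma trans_graph_inj: "trans_graph \<delta>\<^sub>1 = trans_graph \<delta>\<^sub>2 \<Longrightarrow> \<delta>\<^sub>1 = \<delta>\<^sub>2"
proof (rule ext, clarify)
  fix a q assume "trans_graph \<delta>\<^sub>1 = trans_graph \<delta>\<^sub>2"
  then show "\<delta>\<^sub>1 (a, q) = \<delta>\<^sub>2 (a, q)" by (metis mem_trans_graph option.exhaust)
qed

lemma encodes_iff: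
  "encodes c \<delta> \<longleftrightarrow> (\<forall>x q' b d. \<delta> x = Some (q', b, d) \<longrightarrow> d \<le> 2) \<and>
     (\<exists>ts. distinct ts \<and> set ts = trans_graph \<delta> \<and> c = concat (map enc_tuple ts))"
  by (simp add: encodes_def trans_graph_def)

lemma encodes_unique: "encodes c \<delta>\<^sub>1 \<Longrightarrow> encodes c \<delta>\<^sub>2 \<Longrightarrow> \<delta>\<^sub>1 = \<delta>\<^sub>2"
  unfolding encodes_iff by (metis concat_map_enc_tuple_inj trans_graph_inj)

lemma delta_of_eqI: "encodes c \<delta> \<Longrightarrow> delta_of c = \<delta>"
  unfolding delta_of_def proper_code_def using encodes_unique by (auto intro!: the_equality)

lemma enc_num_nth: "i < n \<Longrightarrow> enc_num n ! i = 1" "enc_num n ! n = 2" "length (enc_num n) = Suc n"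
  by (auto simp: enc_num_def nth_append)

lemma set_enc_tuple: "set (enc_tuple t) \<subseteq> {1, 2}"
  by (cases t) (auto simp: enc_num_def)

lemma set_concat_map_enc_tuple: "set (concat (map enc_tuple ts)) \<subseteq> {1, 2}"
  using set_enc_tuple by fastforce

lemma last_enc_tuple_append: "last (enc_tuple t @ concat (map enc_tuple ts)) = 2"
proof (induction ts arbitrary: t)
  case Nil then show ?case by (cases t) (simp add: enc_num_def)
next
  case (Cons t' ts) then show ?case by (simp add: enc_tuple_nonempty)
qed

lemma read_tape_append:
  "i < length u \<Longrightarrow> read_tape (pre @ u @ post) (int (length pre) + int i) = u ! i"
  unfolding read_tape_def by (auto simp: nth_append simp flip: of_nat_add)

lemma read_tape_end: "read_tape c (int (length c)) = 0"
  unfolding read_tape_def by auto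

lemma lin_exec_add: "lin_exec s (m + n) cf = lin_exec s n (lin_exec s m cf)"
  by (induction n) (auto split: option.split)

lemma lin_exec_Suc_if_step: "lin_step s cf = Some cf' \<Longrightarrow> lin_exec s (Suc n) cf = lin_exec s n cf'"
  using lin_exec_add[of s 1 n cf] by simp

lemma lin_exec_stalled: "lin_step s cf = None \<Longrightarrow> lin_exec s n cf = cf"
  by (induction n) auto

lemma lin_step_outs_prefix: "lin_step s cf = Some cf' \<Longrightarrow> prefix (outs cf) (outs cf')"
  by (auto simp: lin_step_def Let_def spawn_def split: if_splits option.splits prod.splits)

lemma lin_exec_outs_mono: "m \<le> n \<Longrightarrow> prefix (outs (lin_exec s m cf)) (outs (lin_exec s n cf))"
proof (induction n rule: dec_induct)
  case (step n)
  then show ?case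
    by (cases "lin_step s (lin_exec s n cf)")
        (auto dest: lin_step_outs_prefix intro: prefix_order.trans)
qed simp

definition reaches :: "(nat \<Rightarrow> nat) \<Rightarrow> lin_cfg \<Rightarrow> lin_cfg \<Rightarrow> bool" where
  "reaches s A B \<longleftrightarrow> (\<exists>n. lin_exec s n A = B)"

lemma reachesI: "lin_exec s n A = B \<Longrightarrow> reaches s A B"
  unfolding reaches_def by blast

lemma reaches_refl: "reaches s A A"
  by (rule reachesI[of _ 0]) simp

lemma reaches_trans[trans]: "reaches s A B \<Longrightarrow> reaches s B C \<Longrightarrow> reaches s A C"
  unfolding reaches_def by (metis lin_exec_add)

lemma same_output_streamI:
  assumes "\<And>n. \<exists>k. prefix (f n) (g k)" and "\<And>n. \<exists>k. prefix (g n) (f k)"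
  shows "same_output_stream f g"
  unfolding same_output_stream_def using assms by (meson prefix_order.trans)

definition digit :: "nat \<Rightarrow> nat \<Rightarrow> nat \<Rightarrow> nat" where
  "digit K N k = N div K ^ k mod K"

definition tape_of :: "nat \<Rightarrow> nat \<Rightarrow> nat \<Rightarrow> nat \<Rightarrow> int \<Rightarrow> nat" where
  "tape_of K L x R i =
     (if i = 0 then x else if i > 0 then digit K R (nat i - 1) else digit K L (nat (- i) - 1))"

definition tape_step :: "nat \<Rightarrow> nat \<Rightarrow> nat \<Rightarrow> nat \<Rightarrow> nat \<Rightarrow> nat \<times> nat \<times> nat" where
  "tape_step K L R w d =
     (if d = 2 then (K * L + w, R mod K, R div K)
      else if d = 1 then (L div K, L mod K, K * R + w)
      else (L, w, R))"

lemma digit_push_0: "w < K \<Longrightarrow> digit K (K * L + w) 0 = w"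
  by (simp add: digit_def)

lemma digit_push_Suc: "w < K \<Longrightarrow> digit K (K * L + w) (Suc k) = digit K L k"
proof -
  assume "w < K"
  then have "(K * L + w) div K = L" by simp
  then show ?thesis by (simp add: digit_def div_mult2_eq)
qed

lemma digit_div: "digit K (N div K) k = digit K N (Suc k)"
  by (simp add: digit_def div_mult2_eq)

lemma tape_of_0[simp]: "tape_of K L x R 0 = x"
  by (simp add: tape_of_def)

lemma tape_of_int[simp]: "tape_of K L x R (int k) = (if k = 0 then x else digit K R (k - 1))"
  by (simp add: tape_of_def)

lemma tape_of_neg_Suc[simp]: "tape_of K L x R (- int (Suc k)) = digit K L k"
  by (simp add: tape_of_def del: of_nat_Suc)

lemma tape_of_move_right:
  assumes "w < K"
  shows "tape_of K (K * L + w) (R mod K) (R div K) i = ((tape_of K L x R)(0 := w)) (i + 1)"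
proof (cases i)
  case (nonneg k)
  then have "i + 1 = int (Suc k)" by simp
  then have "((tape_of K L x R)(0 := w)) (i + 1) = digit K R k" by (simp del: of_nat_Suc)
  moreover have "digit K R k = (if k = 0 then R mod K else digit K (R div K) (k - 1))"
    by (cases k) (simp_all add: digit_div, simp add: digit_def)
  ultimately show ?thesis using nonneg by simp
next
  case (neg k)
  then have "i + 1 = - int k" by simp
  then have "((tape_of K L x R)(0 := w)) (i + 1) = (if k = 0 then w else digit K L (k - 1))"
    by (cases k) (simp_all del: of_nat_Suc)
  moreover have "digit K (K * L + w) k = (if k = 0 then w else digit K L (k - 1))"
    using assms by (cases k) (simp_all add: digit_push_0 digit_push_Suc)
  ultimately show ?thesis using neg by (simp del: of_nat_Suc)
qed

lemma tape_of_move_left: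
  assumes "w < K"
  shows "tape_of K (L div K) (L mod K) (K * R + w) i = ((tape_of K L x R)(0 := w)) (i - 1)"
proof (cases i)
  case (nonneg k)
  show ?thesis
  proof (cases k)
    case 0
    then have "i - 1 = - int (Suc 0)" using nonneg by simp
    then have "((tape_of K L x R)(0 := w)) (i - 1) = L mod K"
        by (simp add: digit_def del: of_nat_Suc)
    then show ?thesis using nonneg 0 by simp
  next
    case (Suc k')
    then have e: "i - 1 = int k'" using nonneg by simp
    have "((tape_of K L x R)(0 := w)) (int k') = digit K (K * R + w) k'"
      using assms by (cases k') (simp_all add: digit_push_0 digit_push_Suc del: of_nat_Suc)
    then show ?thesis unfolding e using nonneg Suc by (simp del: of_nat_Suc)
  qed
next
  case (neg k)
  then have "i - 1 = - int (Suc (Suc k))" by simp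
  then have "((tape_of K L x R)(0 := w)) (i - 1) = digit K L (Suc k)" by (simp del: of_nat_Suc)
  then show ?thesis using neg by (simp add: digit_div del: of_nat_Suc)
qed

lemma tape_of_tape_step:
  assumes "w < K" and "tape_step K L R w d = (L', x', R')"
  shows "tape_of K L' x' R' (j - move d h) = ((tape_of K L x R)(0 := w)) (j - h)"
proof -
  consider "d = 2" | "d = 1" | "d \<noteq> 1" "d \<noteq> 2" by blast
  then show ?thesis
  proof cases
    case 1
    then show ?thesis using assms tape_of_move_right[of w K L R "j - h - 1" x]
      by (simp add: tape_step_def move_def algebra_simps)
  next
    case 2
    then show ?thesis using assms tape_of_move_left[of w K L R "j - h + 1" x]
      by (simp add: tape_step_def move_def algebra_simps)
  next
    case 3
    then show ?thesis using assms by (auto simp: tape_step_def move_def tape_of_def)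
  qed
qed

lemma tape_step_lt: "0 < K \<Longrightarrow> w < K \<Longrightarrow> tape_step K L R w d = (L', x', R') \<Longrightarrow> x' < K"
  by (auto simp: tape_step_def split: if_splits)

(* While the first transition (L, 2, R, 0, 0) is
   read, the new one is written: after a right move ScaleL and AppendDigitL write K * L + w, and
   DivideR writes R div K while counting R mod K; a left move is symmetric; otherwise CopyFields
   copies. WriteTable then writes the new table. The transitions of the old table are skipped
   until TestSource meets the first one with a nonzero source state, which is the first
   transition of the program; the automaton backs up to its start and CopyRest copies the rest
   of the code, entering q1 (Split) on the blank after its end. *)
datatype pstate = Split
  | CopyFields nat nat nat | WriteTable nat nat nat
  | ScaleL nat nat nat | AppendDigitL nat nat nat | CopyStateR nat | DivideR nat nat
  | DivideL nat nat nat | CopyStateL nat nat nat | ScaleR nat nat nat nat |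
      AppendDigitR nat nat nat nat
  | SkipSymbol | TestSource | SkipFields nat | BackToSymbol | BackOverSymbol | CopyRest

instance pstate :: countable by countable_datatype

(* Program states are odd, i.e. reproducing, and only Split is q1. *)
definition pcode :: "pstate \<Rightarrow> nat" where
  "pcode r = (if r = Split then 1 else 2 * to_nat r + 3)"

lemma pcode_inj: "inj pcode"
  unfolding inj_def pcode_def by auto

lemma pcode_odd: "odd (pcode r)"
  unfolding pcode_def by auto

lemma pcode_eq_1_iff: "pcode r = 1 \<longleftrightarrow> r = Split"
  unfolding pcode_def by auto

definition prog_step ::
    "nat \<Rightarrow> (nat \<Rightarrow> nat \<Rightarrow> nat list) \<Rightarrow> nat \<Rightarrow> pstate \<Rightarrow> (pstate \<times> nat \<times> nat) option" where
  "prog_step K tab a r = (case r of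
     Split \<Rightarrow> None
   | CopyFields k p x \<Rightarrow>
       if a = 1 then Some (CopyFields k p x, 1, 2)
       else if a = 2 then Some (if k \<le> 1 then WriteTable p x 0 else CopyFields (k - 1) p x, 2, 2)
       else None
   | WriteTable p x i \<Rightarrow>
       if a = 1 \<or> a = 2 then
         Some (if i < length (tab p x) then (WriteTable p x (i + 1), tab p x ! i, 0)
               else (SkipSymbol, 0, 0))
       else None
   | ScaleL i p w \<Rightarrow>
       if a = 1 then Some (if i + 1 < K then (ScaleL (i + 1) p w, 1, 0) else (ScaleL 0 p w, 1, 2))
       else if a = 2 then Some (AppendDigitL 0 p w, 0, 0)
       else None
   | AppendDigitL k p w \<Rightarrow>
       if a = 2 then Some (if k < w then (AppendDigitL (k + 1) p w, 1, 0) else (CopyStateR p, 2, 2))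
       else None
   | CopyStateR p \<Rightarrow>
       if a = 1 then Some (CopyStateR p, 1, 2)
       else if a = 2 then Some (DivideR 0 p, 2, 2)
       else None
   | DivideR j p \<Rightarrow>
       if a = 1 then Some (DivideR ((j + 1) mod K) p, if j + 1 = K then 1 else 0, 2)
       else if a = 2 then Some (CopyFields 2 p j, 2, 2)
       else None
   | DivideL j p w \<Rightarrow>
       if a = 1 then Some (DivideL ((j + 1) mod K) p w, if j + 1 = K then 1 else 0, 2)
       else if a = 2 then Some (CopyStateL p w j, 2, 2)
       else None
   | CopyStateL p w j \<Rightarrow>
       if a = 1 then Some (CopyStateL p w j, 1, 2)
       else if a = 2 then Some (ScaleR 0 p w j, 2, 2)
       else None
   | ScaleR i p w j \<Rightarrow>
       if a = 1 then
         Some (if i + 1 < K then (ScaleR (i + 1) p w j, 1, 0) else (ScaleR 0 p w j, 1, 2))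
       else if a = 2 then Some (AppendDigitR 0 p w j, 0, 0)
       else None
   | AppendDigitR k p w j \<Rightarrow>
       if a = 2 then
         Some (if k < w then (AppendDigitR (k + 1) p w j, 1, 0) else (CopyFields 2 p j, 2, 2))
       else None
   | SkipSymbol \<Rightarrow>
       if a = 1 then Some (SkipSymbol, 0, 2)
       else if a = 2 then Some (TestSource, 0, 2)
       else None
   | TestSource \<Rightarrow>
       if a = 2 then Some (SkipFields 3, 0, 2)
       else if a = 1 then Some (BackToSymbol, 0, 1)
       else None
   | SkipFields n \<Rightarrow>
       if a = 1 then Some (SkipFields n, 0, 2)
       else if a = 2 then Some (if n \<le> 1 then SkipSymbol else SkipFields (n - 1), 0, 2)
       else None
   | BackToSymbol \<Rightarrow> if a = 2 then Some (BackOverSymbol, 0, 1) else None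
   | BackOverSymbol \<Rightarrow>
       if a = 1 then Some (BackOverSymbol, 0, 1)
       else if a = 2 then Some (CopyRest, 0, 2)
       else None
   | CopyRest \<Rightarrow>
       if a = 1 then Some (CopyRest, 1, 2)
       else if a = 2 then Some (CopyRest, 2, 2)
       else if a = 0 then Some (Split, 0, 0)
       else None)"

lemma prog_step_SomeD: "prog_step K tab a r = Some v \<Longrightarrow> a \<le> 2 \<and> snd (snd v) \<le> 2"
  unfolding prog_step_def by (auto split: pstate.splits if_splits)

definition repro :: "lin_cfg \<Rightarrow> nat \<Rightarrow> int \<Rightarrow> nat list \<Rightarrow> lin_cfg" where
  "repro cf q h ot = cf\<lparr>st := q, hpos := h, otape := ot\<rparr>"

lemma repro_self: "repro cf (st cf) (hpos cf) (otape cf) = cf"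
  by (simp add: repro_def)

lemma repro_simps[simp]: "code (repro cf q h ot) = code cf" "dead (repro cf q h ot) = dead cf"
  "st (repro cf q h ot) = q" "hpos (repro cf q h ot) = h" "otape (repro cf q h ot) = ot"
  "outs (repro cf q h ot) = outs cf" "ipos (repro cf q h ot) = ipos cf"
  by (simp_all add: repro_def)

locale itm_sim =
  fixes M :: itm
  assumes finite_M: "finite (dom M)"
begin

(* K exceeds every symbol M writes, so that every tape cell is a base-K digit. *)
definition K :: nat where "K = Suc (Max (insert 0 ((\<lambda>(p,b,w,d). w) ` ran M)))"

definition mstates :: "nat set" where "mstates = insert 0 ((\<lambda>(p,b,w,d). p) ` ran M)"

definition entry :: "nat \<Rightarrow> nat \<Rightarrow> nat \<Rightarrow> pstate" where
  "entry p w d = (if d = 2 then ScaleL 0 p w else if d = 1 then DivideL 0 p w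
      else CopyFields 5 p w)"

definition input_syms :: "nat \<Rightarrow> nat \<Rightarrow> nat set" where "input_syms p x = {a. M (p,a,x) \<noteq> None}"

definition table_trans :: "nat \<Rightarrow> nat \<Rightarrow> nat \<Rightarrow> (nat \<times> nat \<times> nat) option" where
  "table_trans p x a = (case M (p,a,x) of None \<Rightarrow> None | Some (p',b,w,d) \<Rightarrow> Some
      (pcode (entry p' w d), b, 0))"

definition table_tuple :: "nat \<Rightarrow> nat \<Rightarrow> nat \<Rightarrow> nat \<times> nat \<times> nat \<times> nat \<times> nat" where
  "table_tuple p x a = (case the (table_trans p x a) of (q',b,d) \<Rightarrow> (a, 0, q', b, d))"

definition table :: "nat \<Rightarrow> nat \<Rightarrow> (nat \<times> nat \<times> nat \<times> nat \<times> nat) list" where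
  "table p x = map (table_tuple p x) (sorted_list_of_set (input_syms p x))"

definition table_code :: "nat \<Rightarrow> nat \<Rightarrow> nat list" where
  "table_code p x = concat (map enc_tuple (table p x))"

(* Bounds on the parameters of program states; they make the program finite. *)
definition valid :: "pstate \<Rightarrow> bool" where
 "valid r = (case r of Split \<Rightarrow> False
   | CopyFields k p x \<Rightarrow> k \<le> 5 \<and> p \<in> mstates \<and> x < K
   | ScaleL i p w \<Rightarrow> i < K \<and> p \<in> mstates \<and> w < K
   | AppendDigitL i p w \<Rightarrow> i \<le> K \<and> p \<in> mstates \<and> w < K
   | CopyStateR p \<Rightarrow> p \<in> mstates
   | DivideR j p \<Rightarrow> j < K \<and> p \<in> mstates
   | DivideL j p w \<Rightarrow> j < K \<and> p \<in> mstates \<and> w < K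
   | CopyStateL p w j \<Rightarrow> p \<in> mstates \<and> w < K \<and> j < K
   | ScaleR i p w j \<Rightarrow> i < K \<and> p \<in> mstates \<and> w < K \<and> j < K
   | AppendDigitR i p w j \<Rightarrow> i \<le> K \<and> p \<in> mstates \<and> w < K \<and> j < K
   | WriteTable p x i \<Rightarrow> p \<in> mstates \<and> x < K \<and> i \<le> length (table_code p x)
   | SkipSymbol \<Rightarrow> True | TestSource \<Rightarrow> True | SkipFields n \<Rightarrow> n \<le> 3 | BackToSymbol \<Rightarrow> True |
       BackOverSymbol \<Rightarrow> True | CopyRest \<Rightarrow> True)"

definition valid_states :: "pstate set" where "valid_states = {r. valid r}"

lemma valid_simps[simp]: "valid SkipSymbol" "valid TestSource" "valid BackToSymbol"
    "valid BackOverSymbol" "valid CopyRest" "valid (SkipFields n) \<longleftrightarrow> n \<le> 3"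
  by (simp_all add: valid_def)

lemma K_pos: "0 < K" by (simp add: K_def)

lemma finite_mstates: "finite mstates"
  unfolding mstates_def using finite_M by (simp add: finite_ran)

lemma finite_valid_states: "finite valid_states"
proof -
  let ?A = "{..5::nat} \<times> mstates \<times> {..<K}"
  have "valid_states \<subseteq> (\<lambda>(k,p,x). CopyFields k p x) ` ?A
    \<union> (\<lambda>(i,p,w). ScaleL i p w) ` ({..<K} \<times> mstates \<times> {..<K})
    \<union> (\<lambda>(i,p,w). AppendDigitL i p w) ` ({..K} \<times> mstates \<times> {..<K})
    \<union> CopyStateR ` mstates
    \<union> (\<lambda>(j,p). DivideR j p) ` ({..<K} \<times> mstates)
    \<union> (\<lambda>(j,p,w). DivideL j p w) ` ({..<K} \<times> mstates \<times> {..<K})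
    \<union> (\<lambda>(p,w,j). CopyStateL p w j) ` (mstates \<times> {..<K} \<times> {..<K})
    \<union> (\<lambda>(i,p,w,j). ScaleR i p w j) ` ({..<K} \<times> mstates \<times> {..<K} \<times> {..<K})
    \<union> (\<lambda>(i,p,w,j). AppendDigitR i p w j) ` ({..K} \<times> mstates \<times> {..<K} \<times> {..<K})
    \<union> (\<Union>(p,x)\<in>mstates \<times> {..<K}. WriteTable p x ` {..length (table_code p x)})
    \<union> {SkipSymbol, TestSource, SkipFields 0, SkipFields 1, SkipFields 2, SkipFields 3, BackToSymbol,
        BackOverSymbol, CopyRest}" (is "_ \<subseteq> ?B")
    unfolding valid_states_def valid_def
    by (rule subsetI) (auto simp: image_iff split: pstate.splits)
  moreover have "finite ?B" using finite_mstates by auto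
  ultimately show ?thesis by (rule finite_subset)
qed

definition prog_trans :: "aa_trans" where
  "prog_trans = (\<lambda>(a,q). if q \<in> pcode ` valid_states then map_option (\<lambda>(r,b,d). (pcode r, b, d))
      (prog_step K table_code a (inv pcode q)) else None)"

lemma prog_trans_SomeD: "prog_trans (a,q) = Some (q',b,d) \<Longrightarrow> a \<le> 2 \<and> d \<le> 2
    \<and> q \<in> pcode ` valid_states \<and> odd q"
  unfolding prog_trans_def by (auto split: if_splits dest!: prog_step_SomeD simp: pcode_odd)

lemma finite_trans_graph_prog_trans: "finite (trans_graph prog_trans)"
proof -
  have "trans_graph prog_trans \<subseteq> (\<lambda>(a,q). case the (prog_trans (a,q)) of (q',b,d) \<Rightarrow> (a,q,q',b,d)) `
      ({..2} \<times> pcode ` valid_states)" (is "_ \<subseteq> ?R")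
  proof
    fix t assume "t \<in> trans_graph prog_trans"
    then obtain a q q' b d where t: "t = (a,q,q',b,d)" and h: "prog_trans (a,q) = Some (q',b,d)"
      unfolding trans_graph_def by auto
    show "t \<in> ?R"
      using h prog_trans_SomeD[OF h] unfolding t by (auto intro!: image_eqI[where x="(a,q)"])
  qed
  moreover have "finite ?R" using finite_valid_states by auto
  ultimately show ?thesis by (rule finite_subset)
qed

definition prog_tuples :: "(nat \<times> nat \<times> nat \<times> nat \<times> nat) list" where
  "prog_tuples = (SOME ts. distinct ts \<and> set ts = trans_graph prog_trans)"

lemma prog_tuples_spec: "distinct prog_tuples" "set prog_tuples = trans_graph prog_trans"
proof -
  obtain ts where "distinct ts \<and> set ts = trans_graph prog_trans"
    using finite_distinct_list[OF finite_trans_graph_prog_trans] by metis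
  then have "distinct prog_tuples \<and> set prog_tuples = trans_graph prog_trans" unfolding
      prog_tuples_def by (rule someI)
  then show "distinct prog_tuples" "set prog_tuples = trans_graph prog_trans" by auto
qed

definition prog_code :: "nat list" where "prog_code = concat (map enc_tuple prog_tuples)"

definition member_code :: "nat \<Rightarrow> nat \<Rightarrow> nat \<Rightarrow> nat \<Rightarrow> nat list" where
  "member_code L R p x = enc_tuple (L,2,R,0,0) @ table_code p x @ prog_code"

(* The transition from state 2 only stores the tape: no transition enters state 2. *)
definition member_trans :: "nat \<Rightarrow> nat \<Rightarrow> nat \<Rightarrow> nat \<Rightarrow> aa_trans" where
  "member_trans L R p x = (\<lambda>(a,q). if q = 2 then (if a = L then Some (R,0,0) else None)
      else if q = 0 then table_trans p x a else prog_trans (a,q))"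

lemma finite_input_syms: "finite (input_syms p x)"
proof -
  have "input_syms p x \<subseteq> (\<lambda>(p,a,x). a) ` dom M" unfolding input_syms_def
      by (auto intro!: image_eqI[where x="(p,_,x)"])
  then show ?thesis using finite_M finite_subset by blast
qed

lemma set_table: "set (table p x) = {t. \<exists>a q' b d. t = (a,0::nat,q',b,d)
    \<and> table_trans p x a = Some (q',b,d)}"
proof -
  have e: "set (table p x) = table_tuple p x ` input_syms p x" using finite_input_syms
      by (simp add: table_def)
  show ?thesis unfolding e
  proof (intro equalityI subsetI)
    fix t assume "t \<in> table_tuple p x ` input_syms p x"
    then obtain a where a: "a \<in> input_syms p x" "t = table_tuple p x a" by auto
    then obtain v where v: "table_trans p x a = Some v"
        by (auto simp: input_syms_def table_trans_def split: option.splits)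
    then show "t \<in> {t. \<exists>a q' b d. t = (a,0::nat,q',b,d) \<and> table_trans p x a = Some (q',b,d)}"
      using a by (cases v) (auto simp: table_tuple_def)
  next
    fix t assume "t \<in> {t. \<exists>a q' b d. t = (a,0::nat,q',b,d) \<and> table_trans p x a = Some (q',b,d)}"
    then obtain a q' b d where t: "t = (a,0::nat,q',b,d)"
        "table_trans p x a = Some (q',b,d)" by auto
    then have "a \<in> input_syms p x" by (auto simp: input_syms_def table_trans_def
        split: option.splits)
    moreover have "t = table_tuple p x a" using t by (simp add: table_tuple_def)
    ultimately show "t \<in> table_tuple p x ` input_syms p x" by blast
  qed
qed

lemma prog_trans_even_None: "even q \<Longrightarrow> prog_trans (a,q) = None"
  using prog_trans_SomeD by (cases "prog_trans (a,q)") auto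

lemma distinct_table: "distinct (table p x)"
  unfolding table_def
  by (rule distinct_map[THEN iffD2]) (auto simp: inj_on_def table_tuple_def split: prod.splits)

lemma encodes_member_code: "encodes (member_code L R p x) (member_trans L R p x)"
proof -
  let ?ts = "(L, 2, R, 0, 0) # table p x @ prog_tuples"
  have "\<forall>y q' b d. member_trans L R p x y = Some (q', b, d) \<longrightarrow> d \<le> 2"
    by (auto simp: member_trans_def table_trans_def split: if_splits option.splits
        dest: prog_trans_SomeD)
  moreover have "distinct ?ts"
    using distinct_table prog_tuples_spec set_table
    by (auto dest: prog_trans_SomeD simp: trans_graph_def prog_trans_even_None)
  moreover have "set ?ts = trans_graph (member_trans L R p x)"
    using prog_tuples_spec set_table
    by (auto dest: prog_trans_SomeD simp: trans_graph_def member_trans_def prog_trans_even_None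
        split: if_splits)
  moreover have "member_code L R p x = concat (map enc_tuple ?ts)"
    unfolding member_code_def table_code_def prog_code_def by simp
  ultimately show ?thesis unfolding encodes_iff by blast
qed

lemma delta_of_member_code: "delta_of (member_code L R p x) = member_trans L R p x"
  by (rule delta_of_eqI[OF encodes_member_code])

lemma proper_code_member_code: "proper_code (member_code L R p x)"
  using encodes_member_code proper_code_def by blast

lemma member_trans_pcode: "member_trans L R p x (a, pcode r)
    = (if valid r then map_option (\<lambda>(r',b,d). (pcode r', b, d))
    (prog_step K table_code a r) else None)"
proof -
  have ot: "pcode r \<noteq> 0" "pcode r \<noteq> 2" using pcode_odd[of r] by (auto elim: oddE)
  have "pcode r \<in> pcode ` valid_states \<longleftrightarrow> valid r" using pcode_inj
      by (auto simp: valid_states_def inj_eq)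
  then show ?thesis using ot by (simp add: member_trans_def prog_trans_def inv_f_f[OF pcode_inj])
qed

lemma set_table_code: "set (table_code p' x') \<subseteq> {1,2}"
  unfolding table_code_def by (rule set_concat_map_enc_tuple)

lemma prog_trans_CopyRest: "prog_trans (0, pcode CopyRest) = Some (1, 0, 0)"
proof -
  have "pcode CopyRest \<in> pcode ` valid_states" by (simp add: valid_states_def valid_def)
  then show ?thesis by (simp add: prog_trans_def inv_f_f[OF pcode_inj] prog_step_def
      pcode_def[of Split])
qed

lemma prog_tuples_hd_odd: "\<exists>a q q' b d rest. prog_tuples = (a, q, q', b, d) # rest \<and> odd q"
proof -
  have "(0, pcode CopyRest, 1, 0, 0) \<in> set prog_tuples"
      using prog_tuples_spec(2) prog_trans_CopyRest by (simp add: trans_graph_def)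
  then obtain t rest where prog_step: "prog_tuples = t # rest" by (cases prog_tuples) auto
  obtain a q q' b d where t: "t = (a, q, q', b, d)" by (cases t)
  have "(a, q, q', b, d) \<in> set prog_tuples" using prog_step t by simp
  then have "(a, q, q', b, d) \<in> trans_graph prog_trans" using prog_tuples_spec(2) by simp
  then have "prog_trans (a, q) = Some (q', b, d)" by (simp add: trans_graph_def)
  then have "odd q" using prog_trans_SomeD by blast
  then show ?thesis using prog_step t by blast
qed

lemma prog_code_nonempty: "prog_code \<noteq> []"
proof -
  obtain t rest where "prog_tuples = t # rest" using prog_tuples_hd_odd by blast
  then show ?thesis using enc_tuple_nonempty[of t] by (simp add: prog_code_def)
qed

end

locale member_run = itm_sim +
  fixes cf :: lin_cfg and L R p x :: nat and s :: "nat \<Rightarrow> nat"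
  assumes code_cf: "code cf = member_code L R p x" and alive: "\<not> dead cf"
begin

abbreviation cell where "cell h \<equiv> read_tape (code cf) h"

lemma lin_step_repro:
  assumes ok: "valid r" and t: "prog_step K table_code (cell h) r = Some (r', b, d)"
      and nq: "r' \<noteq> Split"
  shows "lin_step s (repro cf (pcode r) h ot) = Some
      (repro cf (pcode r') (move d h) (if b = 0 then ot else ot @ [b]))"
proof -
  have "delta_of (code cf) (cell h, pcode r) = Some (pcode r', b, d)"
    using ok t by (simp add: code_cf delta_of_member_code member_trans_pcode)
  moreover have "pcode r' \<noteq> q1" using nq pcode_eq_1_iff by (simp add: q1_def)
  ultimately show ?thesis using alive pcode_odd[of r]
    by (simp add: lin_step_def reproducing_def Let_def repro_def)
qed

lemma lin_exec_Suc_repro: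
  assumes "valid r" "prog_step K table_code (cell h) r = Some (r', b, d)" "r' \<noteq> Split"
  shows "lin_exec s (Suc n) (repro cf (pcode r) h ot) = lin_exec s n
      (repro cf (pcode r') (move d h) (if b = 0 then ot else ot @ [b]))"
  using lin_step_repro[OF assms] by (rule lin_exec_Suc_if_step)

lemma reaches_repro_step:
  assumes "valid r" "prog_step K table_code (cell h) r = Some (r', b, d)" "r' \<noteq> Split"
  shows "reaches s (repro cf (pcode r) h ot) (repro cf (pcode r') (move d h)
      (if b = 0 then ot else ot @ [b]))"
proof -
  have "lin_exec s (Suc 0) (repro cf (pcode r) h ot) = repro cf (pcode r') (move d h)
      (if b = 0 then ot else ot @ [b])"
    using lin_exec_Suc_repro[OF assms, of 0 ot] by (simp only: lin_exec.simps(1))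
  then show ?thesis by (rule reachesI)
qed

lemma cell_enc_num:
  assumes c: "code cf = pre @ enc_num n @ post"
  shows "i < n \<Longrightarrow> cell (int (length pre) + int i) = 1" "cell (int (length pre) + int n) = 2"
  using read_tape_append[of _ "enc_num n" pre post] enc_num_nth by (simp_all add: c)

lemma cell_enc_num_start:
  assumes c: "code cf = pre @ enc_num n @ post"
  shows "cell (int (length pre)) = (if n = 0 then 2 else 1)"
  using cell_enc_num(1)[OF c, of 0] cell_enc_num(2)[OF c] by auto

lemma lin_exec_sweep_right:
  assumes ok: "valid r" and t: "prog_step K table_code 1 r = Some (r, b, 2)"
  shows "(\<forall>i<m. cell (h + int i) = 1) \<Longrightarrow>
     lin_exec s m (repro cf (pcode r) h ot) = repro cf (pcode r) (h + int m)
         (ot @ (if b = 0 then [] else replicate m b))"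
proof (induction m arbitrary: h ot)
  case 0 then show ?case by simp
next
  case (Suc m)
  have r1: "cell h = 1" using Suc.prems[rule_format, of 0] by simp
  have nq: "r \<noteq> Split" using ok by (auto simp: valid_def)
  have "lin_exec s (Suc m) (repro cf (pcode r) h ot) = lin_exec s m
      (repro cf (pcode r) (h + 1) (if b = 0 then ot else ot @ [b]))"
    using lin_exec_Suc_repro[OF ok _ nq] t r1 by (simp add: move_def)
  also have "\<dots> = repro cf (pcode r) (h + 1 + int m)
      ((if b = 0 then ot else ot @ [b]) @ (if b = 0 then [] else replicate m b))"
    using Suc.prems by (intro Suc.IH) (auto simp: add.assoc)
  finally show ?case by (auto simp: replicate_append_same[symmetric] add.assoc)
qed

lemma lin_exec_sweep_left:
  assumes ok: "valid r" and t: "prog_step K table_code 1 r = Some (r, 0, 1)"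
  shows "(\<forall>i<m. cell (h - int i) = 1) \<Longrightarrow>
     lin_exec s m (repro cf (pcode r) h ot) = repro cf (pcode r) (h - int m) ot"
proof (induction m arbitrary: h)
  case 0 then show ?case by simp
next
  case (Suc m)
  have r1: "cell h = 1" using Suc.prems[rule_format, of 0] by simp
  have nq: "r \<noteq> Split" using ok by (auto simp: valid_def)
  have "lin_exec s (Suc m) (repro cf (pcode r) h ot) = lin_exec s m (repro cf (pcode r) (h - 1) ot)"
    using lin_exec_Suc_repro[OF ok _ nq] t r1 by (simp add: move_def)
  also have "\<dots> = repro cf (pcode r) (h - 1 - int m) ot"
    using Suc.prems by (intro Suc.IH) (auto simp: algebra_simps)
  finally show ?case by (simp add: algebra_simps)
qed

lemma reaches_field:
  assumes ok: "valid r" and t1: "prog_step K table_code 1 r = Some (r, b, 2)"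
      and t2: "prog_step K table_code 2 r = Some (r', c, 2)"
    and nq: "r' \<noteq> Split" and c: "code cf = pre @ enc_num n @ post"
  shows "reaches s (repro cf (pcode r) (int (length pre)) ot)
     (repro cf (pcode r') (int (length (pre @ enc_num n)))
         (ot @ (if b = 0 then [] else replicate n b) @ (if c = 0 then [] else [c])))"
proof -
  have ones: "\<forall>i<n. cell (int (length pre) + int i) = 1"
    using read_tape_append[of _ "enc_num n" pre post] enc_num_nth by (simp add: c)
  have two: "cell (int (length pre) + int n) = 2"
    using read_tape_append[of n "enc_num n" pre post] enc_num_nth by (simp add: c)
  have "reaches s (repro cf (pcode r) (int (length pre)) ot)
      (repro cf (pcode r) (int (length pre) + int n) (ot @ (if b = 0 then [] else replicate n b)))"
    using lin_exec_sweep_right[OF ok t1 ones] by (rule reachesI)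
  also have "reaches s \<dots> (repro cf (pcode r') (move 2 (int (length pre) + int n))
      (if c = 0 then (ot @ (if b = 0 then [] else replicate n b))
      else (ot @ (if b = 0 then [] else replicate n b)) @ [c]))"
    using reaches_repro_step[OF ok _ nq] t2 two by simp
  also have "repro cf (pcode r') (move 2 (int (length pre) + int n))
      (if c = 0 then (ot @ (if b = 0 then [] else replicate n b))
      else (ot @ (if b = 0 then [] else replicate n b)) @ [c])
     = repro cf (pcode r') (int (length (pre @ enc_num n)))
         (ot @ (if b = 0 then [] else replicate n b) @ (if c = 0 then [] else [c]))"
    by (cases "b = 0"; cases "c = 0") (simp_all add: move_def enc_num_nth)
  finally show ?thesis .
qed

lemma lin_exec_scale_cell:
  assumes fam: "\<And>i. i < K \<Longrightarrow> valid (f i) \<and> prog_step K table_code 1 (f i) = Some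
      (if i+1 < K then (f (i+1), 1, 0) else (f 0, 1, 2))"
    and r1: "cell h = 1"
  shows "i < K \<Longrightarrow> lin_exec s (K - i) (repro cf (pcode (f i)) h ot) = repro cf (pcode (f 0)) (h + 1)
      (ot @ replicate (K - i) 1)"
proof (induction "K - i" arbitrary: i ot)
  case 0 then show ?case by simp
next
  case (Suc n)
  have ok: "valid (f i)" using fam Suc.prems by blast
  have nq: "\<And>j. j < K \<Longrightarrow> f j \<noteq> Split" using fam by (fastforce simp: valid_def)
  show ?case
  proof (cases "i + 1 < K")
    case True
    have e: "K - i = Suc (K - (i+1))" using True by simp
    have nn: "n = K - (i+1)" using Suc.hyps(2) by arith
    have "lin_exec s (Suc (K - (i+1))) (repro cf (pcode (f i)) h ot) = lin_exec s (K - (i+1))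
        (repro cf (pcode (f (i+1))) h (ot @ [1]))"
      using lin_exec_Suc_repro[OF ok, where r'="f (i+1)" and b=1
          and d=0] fam[OF Suc.prems] True r1 nq[of "i+1"] by (simp add: move_def)
    also have "\<dots> = repro cf (pcode (f 0)) (h + 1) ((ot @ [1]) @ replicate (K - (i+1)) 1)"
      using Suc.hyps(1)[of "i+1" "ot @ [1]"] nn True by simp
    finally show ?thesis unfolding e by simp
  next
    case False
    then have ki: "K - i = Suc 0" using Suc.prems by auto
    have t: "prog_step K table_code (cell h) (f i) = Some (f 0, 1, 2)"
        using fam[OF Suc.prems] False r1 by simp
    show ?thesis unfolding ki using lin_exec_Suc_repro[OF ok t nq[OF K_pos], of 0 ot]
        by (simp add: move_def)
  qed
qed

lemma lin_exec_scale:
  assumes fam: "\<And>i. i < K \<Longrightarrow> valid (f i) \<and> prog_step K table_code 1 (f i) = Some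
      (if i+1 < K then (f (i+1), 1, 0) else (f 0, 1, 2))"
  shows "(\<forall>i<m. cell (h + int i) = 1) \<Longrightarrow>
     lin_exec s (K * m) (repro cf (pcode (f 0)) h ot) = repro cf (pcode (f 0)) (h + int m)
         (ot @ replicate (K * m) 1)"
proof (induction m arbitrary: h ot)
  case 0 then show ?case by simp
next
  case (Suc m)
  have r1: "cell h = 1" using Suc.prems[rule_format, of 0] by simp
  have "lin_exec s (K * Suc m) (repro cf (pcode (f 0)) h ot) = lin_exec s (K * m)
      (lin_exec s K (repro cf (pcode (f 0)) h ot))"
    by (simp add: lin_exec_add)
  also have "lin_exec s K (repro cf (pcode (f 0)) h ot) = repro cf (pcode (f 0)) (h + 1)
      (ot @ replicate K 1)"
    using lin_exec_scale_cell[OF fam r1, of 0 ot] K_pos by simp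
  also have "lin_exec s (K * m) \<dots> = repro cf (pcode (f 0)) (h + 1 + int m)
      ((ot @ replicate K 1) @ replicate (K * m) 1)"
    using Suc.prems by (intro Suc.IH) (auto simp: add.assoc)
  finally show ?case by (simp add: replicate_add add.assoc)
qed

lemma reaches_scale_field:
  assumes fam: "\<And>i. i < K \<Longrightarrow> valid (f i) \<and> prog_step K table_code 1 (f i) = Some
      (if i+1 < K then (f (i+1), 1, 0) else (f 0, 1, 2))"
    and c: "code cf = pre @ enc_num m @ post"
  shows "reaches s (repro cf (pcode (f 0)) (int (length pre)) ot)
      (repro cf (pcode (f 0)) (int (length pre) + int m) (ot @ replicate (K * m) 1))"
  using lin_exec_scale[OF fam, of m "int (length pre)" ot] cell_enc_num(1)[OF c]
      by (intro reachesI) blast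

(* A counter modulo K advances on every stroke read and a stroke is written whenever it wraps
   around, so m strokes produce m div K strokes and leave the counter at m mod K. *)
lemma lin_exec_divide:
  assumes fam: "\<And>j. j < K \<Longrightarrow> valid (g j) \<and> prog_step K table_code 1 (g j) = Some
      (g ((j+1) mod K), if j+1 = K then 1 else 0, 2)"
  shows "j0 < K \<Longrightarrow> (\<forall>i<m. cell (h + int i) = 1) \<Longrightarrow>
     lin_exec s m (repro cf (pcode (g j0)) h ot) = repro cf (pcode (g ((j0 + m) mod K))) (h + int m)
         (ot @ replicate ((j0 + m) div K) 1)"
proof (induction m arbitrary: j0 h ot)
  case 0 then show ?case by simp
next
  case (Suc m)
  have r1: "cell h = 1" using Suc.prems(2)[rule_format, of 0] by simp
  have ok: "valid (g j0)" using fam Suc.prems(1) by blast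
  have nq: "g ((j0+1) mod K) \<noteq> Split" using fam[of "(j0+1) mod K"] K_pos by (auto simp: valid_def)
  let ?ot1 = "if j0 + 1 = K then ot @ [1] else ot"
  have "lin_exec s (Suc m) (repro cf (pcode (g j0)) h ot) = lin_exec s m
      (repro cf (pcode (g ((j0+1) mod K))) (h + 1) ?ot1)"
    using lin_exec_Suc_repro[OF ok, where r'="g ((j0+1) mod K)" and b="if j0 + 1 = K then 1 else 0"
        and d=2 and n=m and h=h and ot=ot] fam[OF Suc.prems(1)] r1 nq
    by (simp add: move_def)
  also have "\<dots> = repro cf (pcode (g (((j0+1) mod K + m) mod K))) (h + 1 + int m)
      (?ot1 @ replicate (((j0+1) mod K + m) div K) 1)"
    using Suc.prems K_pos by (intro Suc.IH) (auto simp: add.assoc)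
  also have "((j0+1) mod K + m) mod K = (j0 + Suc m) mod K" by (simp add: mod_add_left_eq)
  also have "?ot1 @ replicate (((j0+1) mod K + m) div K) 1 = ot @ replicate ((j0 + Suc m) div K) 1"
  proof (cases "j0 + 1 = K")
    case True
    have e: "j0 + Suc m = m + K" using True by simp
    have "(j0 + Suc m) div K = Suc (m div K)" unfolding e using K_pos by simp
    then show ?thesis using True K_pos by simp
  next
    case False
    then show ?thesis using Suc.prems(1) by simp
  qed
  finally show ?case by (simp add: add.assoc)
qed

lemma reaches_divide_field:
  assumes fam: "\<And>j. j < K \<Longrightarrow> valid (g j) \<and> prog_step K table_code 1 (g j) = Some
      (g ((j+1) mod K), if j+1 = K then 1 else 0, 2)"
    and c: "code cf = pre @ enc_num m @ post"
  shows "reaches s (repro cf (pcode (g 0)) (int (length pre)) ot)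
      (repro cf (pcode (g (m mod K))) (int (length pre) + int m) (ot @ replicate (m div K) 1))"
  using lin_exec_divide[OF fam, of 0 m "int (length pre)" ot] cell_enc_num(1)[OF c] K_pos
      by (intro reachesI) simp

lemma lin_exec_append_digit:
  assumes fam: "\<And>k. k \<le> w \<Longrightarrow> valid (f k) \<and> prog_step K table_code 2 (f k) = Some
      (if k < w then (f (k+1), 1, 0) else (t, 2, 2))"
    and nt: "t \<noteq> Split" and r2: "cell h = 2"
  shows "k \<le> w \<Longrightarrow> lin_exec s (Suc (w - k)) (repro cf (pcode (f k)) h ot) = repro cf (pcode t) (h + 1)
      (ot @ replicate (w - k) 1 @ [2])"
proof (induction "w - k" arbitrary: k ot)
  case 0
  then have "k = w" by simp
  then show ?case using lin_exec_Suc_repro[of "f k" h t 2 2 0 ot] fam[of k] r2 nt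
      by (simp add: move_def)
next
  case (Suc n)
  have ok: "valid (f k)" using fam Suc.prems by blast
  have kw: "k < w" using Suc.hyps(2) by simp
  have nq: "f (k+1) \<noteq> Split" using fam[of "k+1"] kw by (auto simp: valid_def)
  have e: "w - k = Suc (w - (k+1))" using kw by simp
  have t: "prog_step K table_code (cell h) (f k) = Some (f (k+1), 1, 0)"
      using fam[OF Suc.prems] kw r2 by simp
  have "lin_exec s (Suc (Suc (w - (k+1)))) (repro cf (pcode (f k)) h ot) = lin_exec s
      (Suc (w - (k+1))) (repro cf (pcode (f (k+1))) h (ot @ [1]))"
    using lin_exec_Suc_repro[OF ok t nq] by (simp add: move_def del: lin_exec.simps)
  also have "\<dots> = repro cf (pcode t) (h + 1) ((ot @ [1]) @ replicate (w - (k+1)) 1 @ [2])"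
    using Suc.hyps(1)[of "k+1" "ot @ [1]"] Suc.hyps(2) kw by simp
  finally show ?case unfolding e by simp
qed

lemma reaches_append_digit:
  assumes fam: "\<And>k. k \<le> w \<Longrightarrow> valid (f k) \<and> prog_step K table_code 2 (f k) = Some
      (if k < w then (f (k+1), 1, 0) else (t, 2, 2))"
    and nt: "t \<noteq> Split" and c: "code cf = pre @ enc_num m @ post"
  shows "reaches s (repro cf (pcode (f 0)) (int (length pre) + int m) ot)
      (repro cf (pcode t) (int (length (pre @ enc_num m))) (ot @ replicate w 1 @ [2]))"
proof -
  have e1: "int (length pre) + int m + 1 = int (length (pre @ enc_num m))"
      by (simp add: enc_num_def)
  from lin_exec_append_digit[OF fam nt cell_enc_num(2)[OF c] le0, of ot]
  have "lin_exec s (Suc w) (repro cf (pcode (f 0)) (int (length pre) + int m) ot) = repro cf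
      (pcode t) (int (length (pre @ enc_num m))) (ot @ replicate w 1 @ [2])"
    unfolding e1 diff_zero .
  then show ?thesis by (rule reachesI)
qed

lemma reaches_copy_last_fields:
  assumes "p' \<in> mstates" "j < K" and c: "code cf = pre @ enc_num 0 @ enc_num 0 @ post"
  shows "reaches s (repro cf (pcode (CopyFields 2 p' j)) (int (length pre)) ot)
           (repro cf (pcode (WriteTable p' j 0)) (int (length pre) + 2) (ot @ [2, 2]))"
proof -
  have c': "code cf = (pre @ enc_num 0) @ enc_num 0 @ post" using c by simp
  have "reaches s (repro cf (pcode (CopyFields 2 p' j)) (int (length pre)) ot)
      (repro cf (pcode (CopyFields 1 p' j)) (int (length (pre @ enc_num 0))) (ot @ [2]))"
    using reaches_field[OF _ _ _ _ c, where r="CopyFields 2 p' j" and b=1 and r'="CopyFields 1 p' j"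
        and c=2 and ot=ot] assms by (simp add: valid_def prog_step_def)
  also have "reaches s \<dots> (repro cf (pcode (WriteTable p' j 0))
      (int (length ((pre @ enc_num 0) @ enc_num 0))) ((ot @ [2]) @ [2]))"
    using reaches_field[OF _ _ _ _ c', where r="CopyFields 1 p' j" and b=1
        and r'="WriteTable p' j 0"
        and c=2 and ot="ot @ [2]"] assms by (simp add: valid_def prog_step_def)
  finally show ?thesis by (simp add: enc_num_def ac_simps)
qed

lemma reaches_tape_right:
  assumes p: "p' \<in> mstates" "w < K" and c: "code cf = enc_num L @ enc_num 2 @ enc_num R @ enc_num 0
      @ enc_num 0 @ rest"
  shows "reaches s (repro cf (pcode (ScaleL 0 p' w)) 0 [])
      (repro cf (pcode (WriteTable p' (R mod K) 0)) (int (length (enc_tuple (L, 2, R, 0, 0))))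
      (enc_tuple (K*L+w, 2, R div K, 0, 0)))"
proof -
  let ?p1 = "enc_num L" let ?p2 = "?p1 @ enc_num 2" let ?p3 = "?p2 @ enc_num R"
  have c1: "code cf = [] @ enc_num L @ (enc_num 2 @ enc_num R @ enc_num 0 @ enc_num 0 @
      rest)" using c by simp
  have c2: "code cf = ?p1 @ enc_num 2 @ (enc_num R @ enc_num 0 @ enc_num 0 @ rest)" using c by simp
  have c3: "code cf = ?p2 @ enc_num R @ (enc_num 0 @ enc_num 0 @ rest)" using c by simp
  have c4: "code cf = ?p3 @ enc_num 0 @ enc_num 0 @ rest" using c by simp
  let ?o1 = "replicate (K * L) 1"
  let ?o2 = "?o1 @ replicate w 1 @ [2]"
  let ?o3 = "?o2 @ replicate 2 1 @ [2]"
  let ?o4 = "?o3 @ replicate (R div K) 1"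
  let ?o5 = "?o4 @ [2]"
  have "reaches s (repro cf (pcode (ScaleL 0 p' w)) 0 [])
      (repro cf (pcode (ScaleL 0 p' w)) (int L) ?o1)"
    using reaches_scale_field[where f="\<lambda>i. ScaleL i p' w" and ot="[]", OF _ c1] p
        by (simp add: valid_def prog_step_def)
  also have "reaches s \<dots> (repro cf (pcode (AppendDigitL 0 p' w)) (int L) ?o1)"
    using reaches_repro_step[of "ScaleL 0 p' w" "int L" "AppendDigitL 0 p' w" 0 0 ?o1]
        cell_enc_num(2)[OF c1] p K_pos
    by (simp add: valid_def prog_step_def move_def)
  also have "reaches s \<dots> (repro cf (pcode (CopyStateR p')) (int (length ?p1)) ?o2)"
    using reaches_append_digit[where f="\<lambda>k. AppendDigitL k p' w" and t="CopyStateR p'"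
        and ot="?o1", OF _ _ c1] p
    by (simp add: valid_def prog_step_def)
  also have "reaches s \<dots> (repro cf (pcode (DivideR 0 p')) (int (length ?p2)) ?o3)"
    using reaches_field[OF _ _ _ _ c2, where r="CopyStateR p'" and b=1 and r'="DivideR 0 p'"
        and c=2 and ot="?o2"] p
    by (simp add: valid_def prog_step_def)
  also have "reaches s \<dots> (repro cf (pcode (DivideR (R mod K) p')) (int (length ?p2) + int R) ?o4)"
    using reaches_divide_field[where g="\<lambda>j. DivideR j p'" and ot="?o3", OF _ c3] p
        by (simp add: valid_def prog_step_def)
  also have "reaches s \<dots> (repro cf (pcode (CopyFields 2 p' (R mod K))) (int (length ?p3)) ?o5)"
    using reaches_repro_step[of "DivideR (R mod K) p'" "int (length ?p2) + int R"
        "CopyFields 2 p' (R mod K)" 2 2 ?o4] cell_enc_num(2)[OF c3] p K_pos enc_num_nth(3)[of R]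
    by (simp add: valid_def prog_step_def move_def ac_simps)
  also have "reaches s \<dots> (repro cf (pcode (WriteTable p' (R mod K) 0))
      (int (length ?p3) + 2) (?o5 @ [2, 2]))"
    by (rule reaches_copy_last_fields[OF p(1) _ c4]) (use p K_pos in simp)
  finally show ?thesis by (simp add: enc_num_def replicate_add numeral_2_eq_2)
qed

lemma reaches_tape_left:
  assumes p: "p' \<in> mstates" "w < K" and c: "code cf = enc_num L @ enc_num 2 @ enc_num R @ enc_num 0
      @ enc_num 0 @ rest"
  shows "reaches s (repro cf (pcode (DivideL 0 p' w)) 0 [])
      (repro cf (pcode (WriteTable p' (L mod K) 0)) (int (length (enc_tuple (L, 2, R, 0, 0))))
      (enc_tuple (L div K, 2, K * R + w, 0, 0)))"
proof -
  let ?p1 = "enc_num L" let ?p2 = "?p1 @ enc_num 2" let ?p3 = "?p2 @ enc_num R"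
  let ?j = "L mod K"
  have c1: "code cf = [] @ enc_num L @ (enc_num 2 @ enc_num R @ enc_num 0 @ enc_num 0 @
      rest)" using c by simp
  have c2: "code cf = ?p1 @ enc_num 2 @ (enc_num R @ enc_num 0 @ enc_num 0 @ rest)" using c by simp
  have c3: "code cf = ?p2 @ enc_num R @ (enc_num 0 @ enc_num 0 @ rest)" using c by simp
  have c4: "code cf = ?p3 @ enc_num 0 @ enc_num 0 @ rest" using c by simp
  have jK: "?j < K" using K_pos by simp
  let ?o1 = "replicate (L div K) 1"
  let ?o2 = "?o1 @ [2]"
  let ?o3 = "?o2 @ replicate 2 1 @ [2]"
  let ?o4 = "?o3 @ replicate (K * R) 1"
  let ?o5 = "?o4 @ replicate w 1 @ [2]"
  have "reaches s (repro cf (pcode (DivideL 0 p' w)) 0 [])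
      (repro cf (pcode (DivideL ?j p' w)) (int L) ?o1)"
    using reaches_divide_field[where g="\<lambda>j. DivideL j p' w" and ot="[]", OF _ c1] p
        by (simp add: valid_def prog_step_def)
  also have "reaches s \<dots> (repro cf (pcode (CopyStateL p' w ?j)) (int (length ?p1)) ?o2)"
    using reaches_repro_step[of "DivideL ?j p' w" "int L" "CopyStateL p' w ?j" 2 2 ?o1]
        cell_enc_num(2)[OF c1] p jK
    by (simp add: valid_def prog_step_def move_def enc_num_def ac_simps)
  also have "reaches s \<dots> (repro cf (pcode (ScaleR 0 p' w ?j)) (int (length ?p2)) ?o3)"
    using reaches_field[OF _ _ _ _ c2, where r="CopyStateL p' w ?j" and b=1
        and r'="ScaleR 0 p' w ?j" and c=2 and ot="?o2"] p jK
    by (simp add: valid_def prog_step_def)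
  also have "reaches s \<dots> (repro cf (pcode (ScaleR 0 p' w ?j)) (int (length ?p2) + int R) ?o4)"
    using reaches_scale_field[where f="\<lambda>i. ScaleR i p' w ?j" and ot="?o3", OF _ c3] p jK
        by (simp add: valid_def prog_step_def)
  also have "reaches s \<dots> (repro cf (pcode (AppendDigitR 0 p' w ?j)) (int (length ?p2) + int R) ?o4)"
    using reaches_repro_step[of "ScaleR 0 p' w ?j" "int (length ?p2) + int R"
        "AppendDigitR 0 p' w ?j" 0 0 ?o4] cell_enc_num(2)[OF c3] p jK K_pos
    by (simp add: valid_def prog_step_def move_def)
  also have "reaches s \<dots> (repro cf (pcode (CopyFields 2 p' ?j)) (int (length ?p3)) ?o5)"
    using reaches_append_digit[where f="\<lambda>k. AppendDigitR k p' w ?j" and t="CopyFields 2 p' ?j"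
        and ot="?o4", OF _ _ c3] p jK
    by (simp add: valid_def prog_step_def)
  also have "reaches s \<dots> (repro cf (pcode (WriteTable p' ?j 0))
      (int (length ?p3) + 2) (?o5 @ [2, 2]))"
    by (rule reaches_copy_last_fields[OF p(1) _ c4]) (use p K_pos in simp)
  finally show ?thesis by (simp add: enc_num_def replicate_add numeral_2_eq_2)
qed

lemma reaches_tape_stay:
  assumes p: "p' \<in> mstates" "w < K" and c: "code cf = enc_num L @ enc_num 2 @ enc_num R @ enc_num 0
      @ enc_num 0 @ rest"
  shows "reaches s (repro cf (pcode (CopyFields 5 p' w)) 0 [])
      (repro cf (pcode (WriteTable p' w 0)) (int (length (enc_tuple (L, 2, R, 0, 0))))
      (enc_tuple (L, 2, R, 0, 0)))"
proof -
  let ?p1 = "enc_num L" let ?p2 = "?p1 @ enc_num 2" let ?p3 = "?p2 @ enc_num R"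
  have c1: "code cf = [] @ enc_num L @ (enc_num 2 @ enc_num R @ enc_num 0 @ enc_num 0 @
      rest)" using c by simp
  have c2: "code cf = ?p1 @ enc_num 2 @ (enc_num R @ enc_num 0 @ enc_num 0 @ rest)" using c by simp
  have c3: "code cf = ?p2 @ enc_num R @ (enc_num 0 @ enc_num 0 @ rest)" using c by simp
  have c4: "code cf = ?p3 @ enc_num 0 @ enc_num 0 @ rest" using c by simp
  let ?o1 = "replicate L 1 @ [2]"
  let ?o2 = "?o1 @ replicate 2 1 @ [2]"
  let ?o3 = "?o2 @ replicate R 1 @ [2]"
  have "reaches s (repro cf (pcode (CopyFields 5 p' w)) 0 [])
      (repro cf (pcode (CopyFields 4 p' w)) (int (length ?p1)) ?o1)"
    using reaches_field[OF _ _ _ _ c1, where r="CopyFields 5 p' w" and b=1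
        and r'="CopyFields 4 p' w" and c=2 and ot="[]"] p
    by (simp add: valid_def prog_step_def)
  also have "reaches s \<dots> (repro cf (pcode (CopyFields 3 p' w)) (int (length ?p2)) ?o2)"
    using reaches_field[OF _ _ _ _ c2, where r="CopyFields 4 p' w" and b=1
        and r'="CopyFields 3 p' w" and c=2 and ot="?o1"] p
    by (simp add: valid_def prog_step_def)
  also have "reaches s \<dots> (repro cf (pcode (CopyFields 2 p' w)) (int (length ?p3)) ?o3)"
    using reaches_field[OF _ _ _ _ c3, where r="CopyFields 3 p' w" and b=1
        and r'="CopyFields 2 p' w" and c=2 and ot="?o2"] p
    by (simp add: valid_def prog_step_def)
  also have "reaches s \<dots> (repro cf (pcode (WriteTable p' w 0))
      (int (length ?p3) + 2) (?o3 @ [2, 2]))"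
    by (rule reaches_copy_last_fields[OF p(1) _ c4]) (use p K_pos in simp)
  finally show ?thesis by (simp add: enc_num_def numeral_2_eq_2)
qed

lemma reaches_tape_step:
  assumes p: "p' \<in> mstates" "w < K" and c: "code cf = enc_tuple (L,2,R,0,0) @ rest"
    and tn: "tape_step K L R w d = (L', x', R')"
  shows "reaches s (repro cf (pcode (entry p' w d)) 0 [])
      (repro cf (pcode (WriteTable p' x' 0)) (int (length (enc_tuple (L,2,R,0,0))))
      (enc_tuple (L',2,R',0,0)))"
proof -
  have c': "code cf = enc_num L @ enc_num 2 @ enc_num R @ enc_num 0 @ enc_num 0 @
      rest" using c by simp
  show ?thesis
  proof (cases "d = 2")
    case True then show ?thesis using reaches_tape_right[OF p c'] tn
        by (simp add: entry_def tape_step_def)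
  next
    case F2: False
    show ?thesis
    proof (cases "d = 1")
      case True then show ?thesis using reaches_tape_left[OF p c'] tn F2
          by (simp add: entry_def tape_step_def)
    next
      case False then show ?thesis using reaches_tape_stay[OF p c'] tn F2
          by (simp add: entry_def tape_step_def)
    qed
  qed
qed

lemma lin_exec_write_table:
  assumes p: "p' \<in> mstates" "x' < K" and rh: "cell h = 1 \<or> cell h = 2"
  shows "i \<le> length (table_code p' x') \<Longrightarrow>
    lin_exec s (Suc (length (table_code p' x') - i)) (repro cf (pcode (WriteTable p' x' i)) h ot)
        = repro cf (pcode SkipSymbol) h (ot @ drop i (table_code p' x'))"
proof (induction "length (table_code p' x') - i" arbitrary: i ot)
  case 0
  then have e: "i = length (table_code p' x')" by simp
  have ok: "valid (WriteTable p' x' i)" using p 0 by (simp add: valid_def)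
  have t: "prog_step K table_code (cell h) (WriteTable p' x' i) = Some (SkipSymbol, 0, 0)"
      using rh e by (auto simp: prog_step_def)
  show ?case using lin_exec_Suc_repro[OF ok t, of 0 ot] e by (simp add: move_def)
next
  case (Suc n)
  let ?str = "table_code p' x'"
  have il: "i < length ?str" using Suc.hyps(2) by simp
  have ok: "valid (WriteTable p' x' i)" using p Suc.prems by (simp add: valid_def)
  have t: "prog_step K table_code (cell h) (WriteTable p' x' i) = Some
      (WriteTable p' x' (i+1), ?str ! i, 0)" using rh il by (auto simp: prog_step_def)
  have nz: "?str ! i \<noteq> 0" using set_table_code il nth_mem by fastforce
  have e: "length ?str - i = Suc (length ?str - (i+1))" using il by simp
  have "lin_exec s (Suc (Suc (length ?str - (i+1)))) (repro cf (pcode (WriteTable p' x' i)) h ot) =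
        lin_exec s (Suc (length ?str - (i+1)))
            (repro cf (pcode (WriteTable p' x' (i+1))) h (ot @ [?str ! i]))"
    using lin_exec_Suc_repro[OF ok t] nz by (simp add: move_def del: lin_exec.simps)
  also have "\<dots> = repro cf (pcode SkipSymbol) h ((ot @ [?str ! i]) @ drop (i+1) ?str)"
    using Suc.hyps(1)[of "i+1"] Suc.hyps(2) il by simp
  finally show ?case unfolding e using il by (simp add: Cons_nth_drop_Suc)
qed

lemma reaches_write_table:
  assumes p: "p' \<in> mstates" "x' < K" and rh: "cell h = 1 \<or> cell h = 2"
  shows "reaches s (repro cf (pcode (WriteTable p' x' 0)) h ot)
      (repro cf (pcode SkipSymbol) h (ot @ table_code p' x'))"
proof -
  have "lin_exec s (Suc (length (table_code p' x') - 0))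
      (repro cf (pcode (WriteTable p' x' 0)) h ot) = repro cf (pcode SkipSymbol) h
      (ot @ drop 0 (table_code p' x'))"
    by (rule lin_exec_write_table[OF p rh]) simp
  then show ?thesis unfolding drop_0 by (rule reachesI)
qed

lemma reaches_skip_tuple:
  assumes c: "code cf = pre @ enc_tuple (a, 0, q', b, d) @ post"
  shows "reaches s (repro cf (pcode SkipSymbol) (int (length pre)) ot)
      (repro cf (pcode SkipSymbol) (int (length (pre @ enc_tuple (a, 0, q', b, d)))) ot)"
proof -
  let ?p1 = "pre @ enc_num a" let ?p2 = "?p1 @ enc_num 0"
  let ?p3 = "?p2 @ enc_num q'" let ?p4 = "?p3 @ enc_num b"
  have c1: "code cf = pre @ enc_num a @ (enc_num 0 @ enc_num q' @ enc_num b @ enc_num d @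
      post)" using c by simp
  have c2: "code cf = ?p1 @ enc_num 0 @ (enc_num q' @ enc_num b @ enc_num d @ post)" using c by simp
  have c3: "code cf = ?p2 @ enc_num q' @ (enc_num b @ enc_num d @ post)" using c by simp
  have c4: "code cf = ?p3 @ enc_num b @ (enc_num d @ post)" using c by simp
  have c5: "code cf = ?p4 @ enc_num d @ post" using c by simp
  have "reaches s (repro cf (pcode SkipSymbol) (int (length pre)) ot)
      (repro cf (pcode TestSource) (int (length ?p1)) ot)"
    using reaches_field[OF _ _ _ _ c1, where r=SkipSymbol and b=0 and r'=TestSource and c=0
        and ot=ot] by (simp add: prog_step_def)
  also have "reaches s \<dots> (repro cf (pcode (SkipFields 3)) (move 2 (int (length ?p1))) ot)"
    using reaches_repro_step[of TestSource "int (length ?p1)" "SkipFields 3" 0 2 ot]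
        cell_enc_num_start[OF c2] by (simp add: prog_step_def)
  also have "move 2 (int (length ?p1)) = int (length ?p2)" by (simp add: move_def enc_num_def)
  also have "reaches s (repro cf (pcode (SkipFields 3)) (int (length ?p2)) ot)
      (repro cf (pcode (SkipFields 2)) (int (length ?p3)) ot)"
    using reaches_field[OF _ _ _ _ c3, where r="SkipFields 3" and b=0 and r'="SkipFields 2" and c=0
        and ot=ot] by (simp add: prog_step_def)
  also have "reaches s \<dots> (repro cf (pcode (SkipFields 1)) (int (length ?p4)) ot)"
    using reaches_field[OF _ _ _ _ c4, where r="SkipFields 2" and b=0 and r'="SkipFields 1" and c=0
        and ot=ot] by (simp add: prog_step_def)
  also have "reaches s \<dots> (repro cf (pcode SkipSymbol) (int (length (?p4 @ enc_num d))) ot)"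
    using reaches_field[OF _ _ _ _ c5, where r="SkipFields 1" and b=0 and r'=SkipSymbol and c=0
        and ot=ot] by (simp add: prog_step_def)
  finally show ?thesis by simp
qed

lemma reaches_skip_tuples:
  "\<forall>t\<in>set tus. fst (snd t) = 0 \<Longrightarrow> code cf = pre @ concat (map enc_tuple tus) @ post \<Longrightarrow>
   reaches s (repro cf (pcode SkipSymbol) (int (length pre)) ot)
       (repro cf (pcode SkipSymbol) (int (length (pre @ concat (map enc_tuple tus)))) ot)"
proof (induction tus arbitrary: pre)
  case Nil then show ?case by (simp add: reaches_refl)
next
  case (Cons t tus)
  obtain a q q' b d where t: "t = (a, q, q', b, d)" by (cases t)
  have q: "q = 0" using Cons.prems t by simp
  have "reaches s (repro cf (pcode SkipSymbol) (int (length pre)) ot)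
      (repro cf (pcode SkipSymbol) (int (length (pre @ enc_tuple t))) ot)"
    using reaches_skip_tuple[of pre a q' b d] Cons.prems(2) t q by simp
  also have "reaches s \<dots> (repro cf (pcode SkipSymbol)
      (int (length ((pre @ enc_tuple t) @ concat (map enc_tuple tus)))) ot)"
    using Cons.IH[of "pre @ enc_tuple t"] Cons.prems by simp
  finally show ?case by simp
qed

lemma cell_last:
  "code cf = pre @ post \<Longrightarrow> pre \<noteq> [] \<Longrightarrow> cell (int (length pre) - 1) = last pre"
  by (cases pre rule: rev_cases) (auto simp: read_tape_def nth_append)

lemma reaches_back_to_tuple_start:
  assumes c: "code cf = pre @ enc_num a @ post" and "pre \<noteq> []" "last pre = 2"
  shows "reaches s (repro cf (pcode BackToSymbol) (int (length pre) + int a) ot)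
           (repro cf (pcode CopyRest) (int (length pre)) ot)"
proof -
  have "reaches s (repro cf (pcode BackToSymbol) (int (length pre) + int a) ot)
      (repro cf (pcode BackOverSymbol) (int (length pre) + int a - 1) ot)"
    using reaches_repro_step[of BackToSymbol "int (length pre) + int a" BackOverSymbol 0 1 ot]
      cell_enc_num(2)[OF c] by (simp add: prog_step_def move_def)
  also have "reaches s \<dots> (repro cf (pcode BackOverSymbol) (int (length pre) - 1) ot)"
  proof (rule reachesI)
    have "cell (int (length pre) + int a - 1 - int i) = 1" if "i < a" for i
    proof -
      have "int (length pre) + int a - 1 - int i = int (length pre) + int (a - 1 - i)"
        using that by simp
      moreover have "cell (int (length pre) + int (a - 1 - i)) = 1"
        by (rule cell_enc_num(1)[OF c]) (use that in simp)
      ultimately show ?thesis by (simp only:)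
    qed
    then have "\<forall>i<a. cell (int (length pre) + int a - 1 - int i) = 1" by blast
    then show "lin_exec s a (repro cf (pcode BackOverSymbol) (int (length pre) + int a - 1) ot) =
        repro cf (pcode BackOverSymbol) (int (length pre) - 1) ot"
      using lin_exec_sweep_left[of BackOverSymbol a] by (simp add: prog_step_def)
  qed
  also have "reaches s \<dots> (repro cf (pcode CopyRest) (int (length pre)) ot)"
    using reaches_repro_step[of BackOverSymbol "int (length pre) - 1" CopyRest 0 2 ot]
      cell_last[of pre "enc_num a @ post"] assms by (simp add: prog_step_def move_def)
  finally show ?thesis .
qed

lemma reaches_program_start:
  assumes c: "code cf = pre @ enc_tuple (a, q, q', b, d) @ post"
      and "odd q" "pre \<noteq> []" "last pre = 2"
  shows "reaches s (repro cf (pcode SkipSymbol) (int (length pre)) ot)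
      (repro cf (pcode CopyRest) (int (length pre)) ot)"
proof -
  have c1: "code cf = (pre @ enc_num a) @ enc_num q @ (enc_num q' @ enc_num b @ enc_num d @ post)"
    using c by simp
  have "q \<noteq> 0" using \<open>odd q\<close> by (cases q) auto
  have "reaches s (repro cf (pcode SkipSymbol) (int (length pre)) ot)
      (repro cf (pcode TestSource) (int (length (pre @ enc_num a))) ot)"
    using reaches_field[of SkipSymbol 0 TestSource 0 pre a] c by (simp add: prog_step_def)
  also have "reaches s \<dots> (repro cf (pcode BackToSymbol) (int (length pre) + int a) ot)"
    using reaches_repro_step[of TestSource "int (length (pre @ enc_num a))" BackToSymbol 0 1 ot]
      cell_enc_num_start[OF c1] \<open>q \<noteq> 0\<close> by (simp add: prog_step_def move_def enc_num_def)
  also have "reaches s \<dots> (repro cf (pcode CopyRest) (int (length pre)) ot)"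
    using reaches_back_to_tuple_start[of pre a] c assms(3,4) by simp
  finally show ?thesis .
qed

lemma lin_exec_copy_rest:
  "set u \<subseteq> {1,2} \<Longrightarrow> code cf = pre @ u \<Longrightarrow>
   lin_exec s (length u) (repro cf (pcode CopyRest) (int (length pre)) ot) = repro cf
       (pcode CopyRest) (int (length pre) + int (length u)) (ot @ u)"
proof (induction u arbitrary: pre ot)
  case Nil then show ?case by simp
next
  case (Cons c u)
  have c12: "c = 1 \<or> c = 2" using Cons.prems by auto
  have r: "cell (int (length pre)) = c" using read_tape_append[of 0 "[c]" pre u] Cons.prems by simp
  have t: "prog_step K table_code (cell (int (length pre))) CopyRest = Some (CopyRest, c, 2)"
      using r c12 by (auto simp: prog_step_def)
  have mv: "move 2 (int (length pre)) = int (length (pre @ [c]))" by (simp add: move_def)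
  have "lin_exec s (Suc (length u)) (repro cf (pcode CopyRest) (int (length pre)) ot) =
        lin_exec s (length u) (repro cf (pcode CopyRest) (move 2 (int (length pre)))
            (if c = 0 then ot else ot @ [c]))"
    using lin_exec_Suc_repro[OF _ t, of "length u" ot] c12 by (auto simp del: lin_exec.simps)
  also have "\<dots> = lin_exec s (length u) (repro cf (pcode CopyRest)
      (int (length (pre @ [c]))) (ot @ [c]))"
    using c12 mv by auto
  also have "\<dots> = repro cf (pcode CopyRest) (int (length (pre @ [c])) + int (length u))
      ((ot @ [c]) @ u)"
    using Cons.IH[of "pre @ [c]" "ot @ [c]"] Cons.prems by simp
  finally show ?case by simp
qed

lemma reaches_split:
  assumes "proper_code ot"
  shows "reaches s (repro cf (pcode CopyRest) (int (length (code cf))) ot)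
           (cf\<lparr>code := ot, st := 0, hpos := 0, otape := []\<rparr>)"
proof (rule reachesI[of s "Suc 0"])
  have "delta_of (code cf) (cell (int (length (code cf))), pcode CopyRest) = Some (1, 0, 0)"
    by (simp add: code_cf delta_of_member_code member_trans_pcode read_tape_end prog_step_def
        pcode_def[of Split])
  then have "lin_step s (repro cf (pcode CopyRest) (int (length (code cf))) ot) =
      Some (cf\<lparr>code := ot, st := 0, hpos := 0, otape := []\<rparr>)"
    using alive pcode_odd[of CopyRest] assms
    by (simp add: lin_step_def reproducing_def Let_def repro_def q1_def spawn_def move_def q0_def)
  then show "lin_exec s (Suc 0) (repro cf (pcode CopyRest) (int (length (code cf))) ot) =
      cf\<lparr>code := ot, st := 0, hpos := 0, otape := []\<rparr>" by simp
qed

lemma reaches_copy_program: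
  "reaches s (repro cf (pcode SkipSymbol) (int
      (length (enc_tuple (L, 2, R, 0, 0) @ table_code p x))) ot)
     (repro cf (pcode CopyRest) (int (length (code cf))) (ot @ prog_code))"
proof -
  let ?pre = "enc_tuple (L, 2, R, 0, 0) @ table_code p x"
  have code: "code cf = ?pre @ prog_code" using code_cf by (simp add: member_code_def)
  obtain a q q' b d rest where prog: "prog_tuples = (a, q, q', b, d) # rest" "odd q"
    using prog_tuples_hd_odd by blast
  have "last ?pre = 2"
    using last_enc_tuple_append[of "(L, 2, R, 0, 0)" "table p x"] by (simp add: table_code_def)
  moreover have "?pre \<noteq> []" by (simp add: enc_num_def)
  moreover have "code cf = ?pre @ enc_tuple (a, q, q', b, d) @ concat (map enc_tuple rest)"
    using code prog by (simp add: prog_code_def)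
  ultimately have "reaches s (repro cf (pcode SkipSymbol) (int (length ?pre)) ot)
      (repro cf (pcode CopyRest) (int (length ?pre)) ot)"
    using reaches_program_start prog(2) by blast
  also have "lin_exec s (length prog_code) (repro cf (pcode CopyRest) (int (length ?pre)) ot) =
      repro cf (pcode CopyRest) (int (length (code cf))) (ot @ prog_code)"
    using lin_exec_copy_rest[OF _ code] set_concat_map_enc_tuple by (simp add: prog_code_def code)
  then have "reaches s (repro cf (pcode CopyRest) (int (length ?pre)) ot)
      (repro cf (pcode CopyRest) (int (length (code cf))) (ot @ prog_code))" by (rule reachesI)
  finally show ?thesis .
qed

lemma reaches_offspring:
  assumes p': "p' \<in> mstates" "w < K" and tstep: "tape_step K L R w d = (L', x', R')" and "x' < K"
  shows "reaches s (repro cf (pcode (entry p' w d)) 0 [])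
           (cf\<lparr>code := member_code L' R' p' x', st := 0, hpos := 0, otape := []\<rparr>)"
proof -
  let ?T = "enc_tuple (L, 2, R, 0, 0)" and ?T' = "enc_tuple (L', 2, R', 0, 0)"
  have code: "code cf = ?T @ (table_code p x @ prog_code)" using code_cf
      by (simp add: member_code_def)
  have "reaches s (repro cf (pcode (entry p' w d)) 0 [])
      (repro cf (pcode (WriteTable p' x' 0)) (int (length ?T)) ?T')"
    by (rule reaches_tape_step[OF p' code tstep])
  also have "reaches s \<dots> (repro cf (pcode SkipSymbol) (int (length ?T)) (?T' @ table_code p' x'))"
  proof (rule reaches_write_table[OF p'(1) \<open>x' < K\<close>])
    have ne: "table_code p x @ prog_code \<noteq> []" using prog_code_nonempty by simp
    then have "cell (int (length ?T) + int 0) = (table_code p x @ prog_code) ! 0"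
      using read_tape_append[of 0 "table_code p x @ prog_code" ?T "[]"] code by simp
    moreover have "(table_code p x @ prog_code) ! 0 \<in> {1, 2}"
      using ne nth_mem[of 0 "table_code p x @ prog_code"] set_table_code[of p x]
        set_concat_map_enc_tuple[of prog_tuples] by (auto simp: prog_code_def)
    ultimately show "cell (int (length ?T)) = 1 \<or> cell (int (length ?T)) = 2" by simp
  qed
  also have "reaches s \<dots> (repro cf (pcode SkipSymbol) (int (length (?T @ table_code p x)))
      (?T' @ table_code p' x'))"
    using reaches_skip_tuples[of "table p x" ?T prog_code] code
    by (auto simp: table_code_def table_def table_tuple_def split: prod.splits)
  also have "reaches s \<dots> (repro cf (pcode CopyRest) (int (length (code cf)))
      (?T' @ table_code p' x' @ prog_code))"
    using reaches_copy_program[of "?T' @ table_code p' x'"] by simp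
  also have "reaches s \<dots> (cf\<lparr>code := member_code L' R' p' x', st := 0, hpos := 0, otape := []\<rparr>)"
    using reaches_split[of "?T' @ table_code p' x' @ prog_code"] proper_code_member_code
    by (simp add: member_code_def)
  finally show ?thesis .
qed

end

context itm_sim begin

definition simulates :: "lin_cfg \<Rightarrow> itm_cfg \<Rightarrow> bool" where
  "simulates cf c \<longleftrightarrow>
     (\<exists>L R x. code cf = member_code L R (mst c) x \<and> x < K \<and>
        (\<forall>j. mtape c j = tape_of K L x R (j - mhead c))) \<and>
     mst c \<in> mstates \<and> st cf = 0 \<and> hpos cf = 0 \<and> otape cf = [] \<and> \<not> dead cf \<and>
     ipos cf = mipos c \<and> outs cf = mouts c"

lemma target_in_mstates: "M k = Some (p', b, w, d) \<Longrightarrow> p' \<in> mstates"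
proof -
  assume h: "M k = Some (p', b, w, d)"
  then have "(p', b, w, d) \<in> ran M" by (rule ranI)
  then show ?thesis unfolding mstates_def by (auto intro!: image_eqI[where x="(p', b, w, d)"])
qed

lemma written_lt_K: "M k = Some (p', b, w, d) \<Longrightarrow> w < K"
proof -
  assume h: "M k = Some (p', b, w, d)"
  have "(p', b, w, d) \<in> ran M" using h by (rule ranI)
  then have "w \<in> (\<lambda>(p,b,w,d). w) ` ran M" by (auto intro!: image_eqI[where x="(p', b, w, d)"])
  moreover have "finite ((\<lambda>(p,b,w,d). w) ` ran M)" using finite_M by (simp add: finite_ran)
  ultimately have "w \<le> Max (insert 0 ((\<lambda>(p,b,w,d). w) ` ran M))" by simp
  then show ?thesis by (simp add: K_def)
qed

lemma entry_neq_Split: "entry p w d \<noteq> Split"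
  by (simp add: entry_def)

definition initial_code :: "nat list" where
  "initial_code = member_code 0 0 0 0"

lemma proper_code_initial: "proper_code initial_code"
  unfolding initial_code_def by (rule proper_code_member_code)

lemma simulates_initial: "simulates (lin_init initial_code) itm_init"
proof -
  have "\<forall>j. mtape itm_init j = tape_of K 0 0 0 (j - mhead itm_init)"
    by (simp add: itm_init_def tape_of_def digit_def)
  then show ?thesis unfolding simulates_def initial_code_def using K_pos
    by (auto simp: mstates_def lin_init_def itm_init_def q0_def)
qed

lemma simulates_lin_step:
  assumes "simulates cf c"
  shows "lin_step s cf = (case table_trans (mst c) (mtape c (mhead c)) (s (mipos c)) of
      None \<Rightarrow> None
    | Some (q', b, d) \<Rightarrow> Some (cf\<lparr>st := q', ipos := Suc (ipos cf), outs := outs cf @ [b]\<rparr>))"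
proof -
  obtain L R x where code: "code cf = member_code L R (mst c) x"
    and tape: "\<forall>j. mtape c j = tape_of K L x R (j - mhead c)"
    using assms unfolding simulates_def by blast
  have "delta_of (code cf) (a, 0) = table_trans (mst c) (mtape c (mhead c)) a" for a
    using tape by (simp add: code delta_of_member_code member_trans_def)
  moreover have "pcode (entry p' w d) \<noteq> q1" for p' w d
    using entry_neq_Split pcode_eq_1_iff by (simp add: q1_def)
  ultimately show ?thesis using assms
    by (auto simp: simulates_def lin_step_def reproducing_def table_trans_def Let_def
        split: option.split)
qed

lemma lin_step_None_if_itm_step_None:
  assumes "simulates cf c" and "itm_step M s c = None"
  shows "lin_step s cf = None"
proof -
  have "M (mst c, s (mipos c), mtape c (mhead c)) = None"
    using assms(2) by (auto simp: itm_step_def split: option.splits)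
  then show ?thesis by (simp add: simulates_lin_step[OF assms(1)] table_trans_def)
qed

lemma simulates_itm_step:
  assumes sim: "simulates cf c" and step: "itm_step M s c = Some c'"
  shows "\<exists>n>0. lin_step s cf \<noteq> None \<and> simulates (lin_exec s n cf) c'"
proof -
  obtain L R x where code: "code cf = member_code L R (mst c) x" and "x < K"
    and tape: "\<forall>j. mtape c j = tape_of K L x R (j - mhead c)"
    using sim unfolding simulates_def by blast
  have scan: "mtape c (mhead c) = x" using tape by simp
  obtain p' b w d where Mv: "M (mst c, s (mipos c), x) = Some (p', b, w, d)"
    and c': "c' = \<lparr>mst = p', mtape = (mtape c)(mhead c := w), mhead = move d (mhead c),
                  mipos = Suc (mipos c), mouts = mouts c @ [b]\<rparr>"
    using step scan by (auto simp: itm_step_def split: option.splits)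
  have p': "p' \<in> mstates" and "w < K" using target_in_mstates[OF Mv] written_lt_K[OF Mv] by auto
  define cf1 where
    "cf1 = cf\<lparr>st := pcode (entry p' w d), ipos := Suc (ipos cf), outs := outs cf @ [b]\<rparr>"
  have step1: "lin_step s cf = Some cf1"
    using Mv scan by (simp add: simulates_lin_step[OF sim] table_trans_def cf1_def)
  obtain L' x' R' where tstep: "tape_step K L R w d = (L', x', R')" by (metis prod_cases3)
  have "x' < K" using tape_step_lt[OF K_pos \<open>w < K\<close> tstep] .
  define cf2 where "cf2 = cf1\<lparr>code := member_code L' R' p' x', st := 0, hpos := 0, otape := []\<rparr>"
  interpret member_run M cf1 L R "mst c" x s
    using sim by unfold_locales (auto simp: finite_M cf1_def code simulates_def)
  have "repro cf1 (pcode (entry p' w d)) 0 [] = cf1"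
    using repro_self[of cf1] sim by (simp add: cf1_def simulates_def)
  then have "reaches s cf1 cf2"
    using reaches_offspring[OF p' \<open>w < K\<close> tstep \<open>x' < K\<close>] by (simp add: cf2_def)
  then obtain m where "lin_exec s m cf1 = cf2" unfolding reaches_def by blast
  then have run: "lin_exec s (Suc m) cf = cf2" using lin_exec_Suc_if_step[OF step1] by simp
  have "mtape c' j = tape_of K L' x' R' (j - mhead c')" for j
    using tape tape_of_tape_step[OF \<open>w < K\<close> tstep, of j "mhead c"] by (auto simp: c')
  then have "simulates cf2 c'"
    using sim p' \<open>x' < K\<close> by (auto simp: simulates_def c' cf1_def cf2_def)
  then show ?thesis using run step1 by blast
qed

lemma simulation_run:
  "\<exists>m. simulates (lin_exec s m (lin_init initial_code)) (itm_exec M s n itm_init) \<and>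
     (n \<le> m \<or> lin_step s (lin_exec s m (lin_init initial_code)) = None)"
proof (induction n)
  case 0
  show ?case using simulates_initial by (intro exI[of _ 0]) simp
next
  case (Suc n)
  then obtain m where sim: "simulates (lin_exec s m (lin_init initial_code))
      (itm_exec M s n itm_init)"
    and m: "n \<le> m \<or> lin_step s (lin_exec s m (lin_init initial_code)) = None" by blast
  show ?case
  proof (cases "itm_step M s (itm_exec M s n itm_init)")
    case None
    then show ?thesis using sim lin_step_None_if_itm_step_None by fastforce
  next
    case (Some c')
    then obtain k where "k > 0" and "lin_step s (lin_exec s m (lin_init initial_code)) \<noteq> None"
      and "simulates (lin_exec s (m + k) (lin_init initial_code)) c'"
      using simulates_itm_step[OF sim Some] by (auto simp: lin_exec_add)
    then show ?thesis using Some m by (intro exI[of _ "m + k"]) auto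
  qed
qed

lemma outs_prefix_mouts:
  "prefix (outs (lin_exec s n (lin_init initial_code))) (mouts (itm_exec M s n itm_init))"
proof -
  obtain m where sim: "simulates (lin_exec s m (lin_init initial_code)) (itm_exec M s n itm_init)"
    and m: "n \<le> m \<or> lin_step s (lin_exec s m (lin_init initial_code)) = None"
    using simulation_run by blast
  then have out: "outs (lin_exec s m (lin_init initial_code)) = mouts (itm_exec M s n itm_init)"
    by (simp add: simulates_def)
  show ?thesis
  proof (cases "n \<le> m")
    case True
    then show ?thesis using lin_exec_outs_mono out by metis
  next
    case False
    then have "lin_exec s n (lin_init initial_code) = lin_exec s m (lin_init initial_code)"
      using m lin_exec_add[of s m "n - m"] lin_exec_stalled by simp
    then show ?thesis using out by simp
  qed
qed


lemma mouts_in_outs: "\<exists>m. mouts (itm_exec M s n itm_init) = outs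
    (lin_exec s m (lin_init initial_code))"
  using simulation_run[of s n] unfolding simulates_def by metis

end

theorem theorem2:
  fixes M :: itm
  assumes "finite (dom M)"
  shows "\<exists>c. proper_code c \<and>
           (\<forall>s. same_output_stream
                  (\<lambda>n. outs (lin_exec s n (lin_init c)))
                  (\<lambda>n. mouts (itm_exec M s n itm_init)))"
proof -
  interpret itm_sim M using assms by unfold_locales
  have "same_output_stream (\<lambda>n. outs (lin_exec s n (lin_init initial_code)))
      (\<lambda>n. mouts (itm_exec M s n itm_init))" for s
    by (rule same_output_streamI) (use outs_prefix_mouts mouts_in_outs in \<open>metis
        prefix_order.refl\<close>)+
  then show ?thesis using proper_code_initial by blast
qed

end
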